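(* Let $\Gamma\subset\mathbb{C}^*$ be a subgroup with the accumulation property, i.e. either $\Gamma$ contains an element $q$ with $|q|\ne1$, or $\Gamma$ contains a sequence $\gamma_n\to1$ in $\mathbb{C}^*$ with $\gamma_n\ne1$. Let $\widetilde\psi:\mathbb{C}^*\to\mathbb{C}^*$ be holomorphic and $\sigma:\Gamma\to\Gamma$ a group homomorphism with $\widetilde\psi(\gamma z)=\sigma(\gamma)\widetilde\psi(z)$ for all $\gamma\in\Gamma$, $z\in\mathbb{C}^*$. Then there exist $a\in\mathbb{C}^*$ and $n\in\mathbb{Z}$ such that $\widetilde\psi(z)=az^n$ and $\sigma(\gamma)=\gamma^n$ for all $\gamma\in\Gamma$. *)

theory Defs
  imports "HOL-Complex_Analysis.Complex_Analysis"
begin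

definition subgroup_Cstar :: "complex set \<Rightarrow> bool" where
  "subgroup_Cstar G \<longleftrightarrow> 1 \<in> G \<and> 0 \<notin> G \<and>
     (\<forall>x\<in>G. \<forall>y\<in>G. x * y \<in> G) \<and> (\<forall>x\<in>G. inverse x \<in> G)"

definition accumulation_property :: "complex set \<Rightarrow> bool" where
  "accumulation_property G \<longleftrightarrow>
     (\<exists>q\<in>G. norm q \<noteq> 1) \<or>
     (\<exists>g::nat \<Rightarrow> complex. (\<forall>n. g n \<in> G \<and> g n \<noteq> 1) \<and> g \<longlonglongrightarrow> 1)"

end

theory Submission
  imports Defs
begin

text \<open>
  Lift \<psi> through exp to an entire function G with exp (G w) = \<psi> (exp w). The equivariance
  says that exp \<circ> G is multiplied by the constant \<sigma> (exp l) under translation by any l with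
  exp l \<in> \<Gamma>, so the logarithmic derivative G' is periodic with all these periods. By the
  accumulation property G' either has two \<real>-independent periods (Ln q and 2\<pi>i) and is
  constant by Liouville, or has arbitrarily small periods and is constant by the identity
  theorem. Hence G is affine, G w = n w + b, and 2\<pi>i-periodicity of exp \<circ> G forces n \<in> \<int>.
\<close>

lemma subgroup_Cstar_nonzero: "subgroup_Cstar G \<Longrightarrow> g \<in> G \<Longrightarrow> g \<noteq> 0"
  by (auto simp: subgroup_Cstar_def)

lemma holomorphic_log_of_comp_exp:
  assumes "f holomorphic_on - {0}" "\<And>z. z \<noteq> 0 \<Longrightarrow> f z \<noteq> 0"
  obtains G where "G holomorphic_on UNIV" "\<And>w. exp (G w) = f (exp w)"
proof -
  have "(\<lambda>w. f (exp w)) holomorphic_on UNIV"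
    by (rule holomorphic_on_compose_gen[of exp UNIV f "- {0}", unfolded o_def])
       (auto intro: holomorphic_intros assms(1))
  from holomorphic_logarithm_exists[OF convex_UNIV open_UNIV this, of 0] assms(2)
  show ?thesis using that by auto
qed

lemma deriv_periodic_if_exp_quasiperiodic:
  assumes G: "G holomorphic_on UNIV" and "c \<noteq> 0"
    and quasi: "\<And>w. exp (G (w + l)) = c * exp (G w)"
  shows "deriv G (w + l) = deriv G w"
proof -
  have DG: "(G has_field_derivative deriv G v) (at v)" for v
    using holomorphic_derivI[OF G open_UNIV] by blast
  have "((\<lambda>v. exp (G (v + l))) has_field_derivative exp (G (w + l)) * deriv G (w + l)) (at w)"
    using DG[of "w + l", unfolded DERIV_shift] by (auto intro!: derivative_eq_intros)
  moreover have "((\<lambda>v. exp (G (v + l))) has_field_derivative c * (exp (G w) * deriv G w)) (at w)"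
    unfolding quasi using DG[of w] by (auto intro!: derivative_eq_intros)
  ultimately have "exp (G (w + l)) * deriv G (w + l) = c * (exp (G w) * deriv G w)"
    by (rule DERIV_unique)
  then show ?thesis
    using quasi[of w] \<open>c \<noteq> 0\<close> by simp
qed

lemma complex_real_coordinates:
  assumes "Im (\<omega>2 * cnj \<omega>1) \<noteq> 0"
  shows "\<exists>s t. w = of_real s * \<omega>1 + of_real t * \<omega>2"
proof -
  define d where "d = Im (\<omega>2 * cnj \<omega>1)"
  have "d \<noteq> 0"
    unfolding d_def by (rule assms)
  define s where "s = - Im (w * cnj \<omega>2) / d"
  define t where "t = Im (w * cnj \<omega>1) / d"
  have "of_real d * w = of_real (- Im (w * cnj \<omega>2)) * \<omega>1 + of_real (Im (w * cnj \<omega>1)) * \<omega>2"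
    by (intro complex_eqI) (simp_all add: d_def algebra_simps)
  also have "\<dots> = of_real d * (of_real s * \<omega>1 + of_real t * \<omega>2)"
    using assms by (simp add: s_def t_def d_def distrib_left flip: of_real_mult)
  finally have "w = of_real s * \<omega>1 + of_real t * \<omega>2"
    using \<open>d \<noteq> 0\<close> by simp
  then show ?thesis by blast
qed

lemma entire_doubly_periodic_constant:
  fixes f :: "complex \<Rightarrow> complex"
  assumes f: "f holomorphic_on UNIV"
    and per1: "\<And>w. f (w + \<omega>1) = f w" and per2: "\<And>w. f (w + \<omega>2) = f w"
    and indep: "Im (\<omega>2 * cnj \<omega>1) \<noteq> 0"
  shows "f constant_on UNIV"
proof -
  interpret p1: periodic_fun_simple f \<omega>1 by standard (rule per1)
  interpret p2: periodic_fun_simple f \<omega>2 by standard (rule per2)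
  have "f w \<in> f ` cball 0 (norm \<omega>1 + norm \<omega>2)" for w
  proof -
    obtain s t where w: "w = of_real s * \<omega>1 + of_real t * \<omega>2"
      using complex_real_coordinates[OF indep] by blast
    define w' where "w' = of_real (frac s) * \<omega>1 + of_real (frac t) * \<omega>2"
    have "w = w' + of_int \<lfloor>s\<rfloor> * \<omega>1 + of_int \<lfloor>t\<rfloor> * \<omega>2"
      by (simp add: w w'_def frac_def algebra_simps)
    then have "f w = f w'"
      by (simp add: p1.plus_of_int p2.plus_of_int)
    moreover have "norm w' \<le> norm \<omega>1 + norm \<omega>2"
    proof -
      have "norm w' \<le> frac s * norm \<omega>1 + frac t * norm \<omega>2"
        unfolding w'_def by (rule norm_triangle_le) (simp add: norm_mult)
      also have "\<dots> \<le> norm \<omega>1 + norm \<omega>2"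
        by (intro add_mono mult_left_le_one_le) (auto simp: frac_lt_1 less_imp_le)
      finally show ?thesis .
    qed
    ultimately show ?thesis by auto
  qed
  then have "range f \<subseteq> f ` cball 0 (norm \<omega>1 + norm \<omega>2)" by blast
  moreover have "bounded (f ` cball 0 (norm \<omega>1 + norm \<omega>2))"
    by (intro compact_imp_bounded compact_continuous_image holomorphic_on_imp_continuous_on
          holomorphic_on_subset[OF f]) auto
  ultimately show ?thesis
    using Liouville_theorem[OF f] bounded_subset by blast
qed

lemma entire_constant_if_small_periods:
  fixes f :: "complex \<Rightarrow> complex"
  assumes f: "f holomorphic_on UNIV"
    and "l \<longlonglongrightarrow> 0" "\<And>n. l n \<noteq> 0" and per: "\<And>n w. f (w + l n) = f w"
  shows "f constant_on UNIV"
proof -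
  have "0 islimpt range l"
    unfolding islimpt_sequential using assms(2,3) by (intro exI[of _ l]) auto
  moreover have "f (l n) - f 0 = 0" for n
    using per[of 0 n] by simp
  ultimately have "f w - f 0 = 0" for w
    by (intro analytic_continuation[of "\<lambda>w. f w - f 0" UNIV "range l" 0 w])
       (auto intro!: holomorphic_intros f)
  then show ?thesis
    unfolding constant_on_def by auto
qed

lemma entire_constant_if_periodic_mod_subgroup:
  fixes f :: "complex \<Rightarrow> complex"
  assumes \<Gamma>: "subgroup_Cstar \<Gamma>" and acc: "accumulation_property \<Gamma>"
    and f: "f holomorphic_on UNIV" and per: "\<And>l w. exp l \<in> \<Gamma> \<Longrightarrow> f (w + l) = f w"
  shows "f constant_on UNIV"
  using acc unfolding accumulation_property_def
proof (elim disjE bexE exE conjE)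
  fix q assume q: "q \<in> \<Gamma>" "norm q \<noteq> 1"
  have "q \<noteq> 0" using subgroup_Cstar_nonzero[OF \<Gamma> q(1)] .
  have "exp (2 * of_real pi * \<i>) \<in> \<Gamma>"
    using \<Gamma> by (simp add: subgroup_Cstar_def)
  moreover have "Im (2 * of_real pi * \<i> * cnj (Ln q)) \<noteq> 0"
    using q \<open>q \<noteq> 0\<close> by simp
  ultimately show ?thesis
    using entire_doubly_periodic_constant[OF f, of "Ln q" "2 * of_real pi * \<i>"] per q \<open>q \<noteq> 0\<close>
    by simp
next
  fix g assume g: "\<forall>n. g n \<in> \<Gamma> \<and> g n \<noteq> 1" "g \<longlonglongrightarrow> 1"
  then have "g n \<noteq> 0" for n
    using subgroup_Cstar_nonzero[OF \<Gamma>] by blast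
  then have "exp (Ln (g n)) = g n" for n
    by simp
  then have "Ln (g n) \<noteq> 0" "exp (Ln (g n)) \<in> \<Gamma>" for n
    using g(1) by (metis exp_zero, simp)
  moreover have "(\<lambda>n. Ln (g n)) \<longlonglongrightarrow> 0"
    using tendsto_Ln[OF g(2)] by simp
  ultimately show ?thesis
    using entire_constant_if_small_periods[OF f] per by blast
qed

lemma entire_linear_if_deriv_constant:
  assumes G: "G holomorphic_on UNIV" and "\<And>w. deriv G w = c"
  shows "G w = c * w + G 0"
proof -
  have "((\<lambda>v. G v - c * v) has_field_derivative 0) (at v within UNIV)" for v
    using holomorphic_derivI[OF G open_UNIV, of v] assms(2)
    by (auto intro!: derivative_eq_intros)
  from has_field_derivative_zero_constant[OF convex_UNIV this]
  obtain b where "\<And>v. G v - c * v = b" by blast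
  from this[of w] this[of 0] show ?thesis by (simp add: algebra_simps)
qed

lemma exp_two_pi_i_mult_eq_1_imp_Ints:
  assumes "exp (2 * of_real pi * \<i> * c) = 1"
  shows "c \<in> \<int>"
proof -
  obtain n :: int
    where "Re (2 * of_real pi * \<i> * c) = 0" "Im (2 * of_real pi * \<i> * c) = of_int (2 * n) * pi"
    using assms unfolding exp_eq_1 by blast
  then have "c = of_int n" by (intro complex_eqI) auto
  then show ?thesis by simp
qed

lemma power_int_if_exp_lift_affine:
  fixes f G :: "complex \<Rightarrow> complex"
  assumes lift: "\<And>w. exp (G w) = f (exp w)" and affine: "\<And>w. G w = c * w + b"
  obtains n :: int where "\<And>z. z \<noteq> 0 \<Longrightarrow> f z = exp b * z powi n"
proof -
  have "exp (2 * of_real pi * \<i> * c + b) = exp b"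
    using lift[of "2 * of_real pi * \<i>"] lift[of 0] affine[of "2 * of_real pi * \<i>"] affine[of 0]
    by (simp add: mult.commute)
  then have "exp (2 * of_real pi * \<i> * c) = 1"
    by (simp add: exp_add)
  then obtain n :: int where n: "c = of_int n"
    using exp_two_pi_i_mult_eq_1_imp_Ints Ints_cases by blast
  have "f z = exp b * z powi n" if "z \<noteq> 0" for z
  proof -
    have "f z = exp (G (Ln z))"
      using that by (simp add: lift)
    also have "\<dots> = exp b * exp (Ln z) powi n"
      by (simp add: affine n exp_add exp_power_int mult.commute)
    finally show ?thesis
      using that by simp
  qed
  then show ?thesis by (rule that)
qed

theorem mainTheorem7:
  fixes \<Gamma> :: "complex set" and \<psi> \<sigma> :: "complex \<Rightarrow> complex"
  assumes "subgroup_Cstar \<Gamma>"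
    and "accumulation_property \<Gamma>"
    and "\<psi> holomorphic_on (- {0})"
    and "\<And>z. z \<noteq> 0 \<Longrightarrow> \<psi> z \<noteq> 0"
    and "\<And>\<gamma>. \<gamma> \<in> \<Gamma> \<Longrightarrow> \<sigma> \<gamma> \<in> \<Gamma>"
    and "\<And>\<gamma> \<delta>. \<gamma> \<in> \<Gamma> \<Longrightarrow> \<delta> \<in> \<Gamma> \<Longrightarrow> \<sigma> (\<gamma> * \<delta>) = \<sigma> \<gamma> * \<sigma> \<delta>"
    and "\<And>\<gamma> z. \<gamma> \<in> \<Gamma> \<Longrightarrow> z \<noteq> 0 \<Longrightarrow> \<psi> (\<gamma> * z) = \<sigma> \<gamma> * \<psi> z"
  shows "\<exists>a::complex. \<exists>n::int. a \<noteq> 0 \<and>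
           (\<forall>z. z \<noteq> 0 \<longrightarrow> \<psi> z = a * z powi n) \<and>
           (\<forall>\<gamma>\<in>\<Gamma>. \<sigma> \<gamma> = \<gamma> powi n)"
proof -
  obtain G where G: "G holomorphic_on UNIV" and lift: "\<And>w. exp (G w) = \<psi> (exp w)"
    using holomorphic_log_of_comp_exp[OF assms(3,4)] by blast
  have "deriv G (w + l) = deriv G w" if "exp l \<in> \<Gamma>" for l w
  proof (rule deriv_periodic_if_exp_quasiperiodic[OF G])
    show "\<sigma> (exp l) \<noteq> 0"
      using subgroup_Cstar_nonzero[OF assms(1) assms(5)[OF that]] .
    show "exp (G (v + l)) = \<sigma> (exp l) * exp (G v)" for v
      using assms(7)[OF that, of "exp v"] by (simp add: lift exp_add mult.commute)
  qed
  then have "deriv G constant_on UNIV"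
    using entire_constant_if_periodic_mod_subgroup[OF assms(1,2)] holomorphic_deriv[OF G] by blast
  then obtain c where "\<And>w. deriv G w = c"
    unfolding constant_on_def by blast
  then have "G w = c * w + G 0" for w
    using entire_linear_if_deriv_constant[OF G] by blast
  then obtain n :: int where \<psi>_eq: "\<And>z. z \<noteq> 0 \<Longrightarrow> \<psi> z = exp (G 0) * z powi n"
    using power_int_if_exp_lift_affine[where f = \<psi> and G = G, OF lift] by blast
  have "\<sigma> \<gamma> = \<gamma> powi n" if "\<gamma> \<in> \<Gamma>" for \<gamma>
    using assms(7)[OF that, of 1] \<psi>_eq[of 1] \<psi>_eq[of \<gamma>] subgroup_Cstar_nonzero[OF assms(1) that]
    by simp
  with \<psi>_eq show ?thesis
    by (intro exI[of _ "exp (G 0)"] exI[of _ n]) auto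
qed

end
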